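(* Let $\mathbf{A}$ be a strictly simple algebra and let $e$ be a minimal idempotent of $\mathbf{A}$. Then $e$ is separating and dense for $\mathbf{A}$, and the localization $e(\mathbf{A})$ is a term minimal strictly simple algebra.
   Context: An algebra is strictly simple if it is finite, simple, and has no nontrivial proper subalgebras (i.e. every proper subalgebra has at most one element). A unary term $e$ of $\mathbf{A}$ is a minimal idempotent if its term operation is nonconstant, satisfies $e(e(x))=e(x)$, and its range is minimal (under inclusion) among the ranges of nonconstant idempotent unary term operations of $\mathbf{A}$. An algebra is term minimal if the term $x$ is a minimal idempotent, i.e. every idempotent unary term operation is either constant or the identity. The localization $e(\mathbf{A})$ is the algebra with universe $e(A)$ whose fundamental operations are the restrictions to $e(A)$ of the term operations $e(t(x_1,\dots,x_n))$, one for each term $t$ of $\mathbf{A}$. The term $e$ separates $\mathbf{A}$ if for all $a\neq b$ in $A$ there is a unary term $g$ with $e(g(a))\neq e(g(b))$; $e$ is dense for $\mathbf{A}$ if $\mathbf{A}$ is generated by $e(A)$. *)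

theory Defs
  imports Main
begin

text \<open>An algebra is given by a carrier set A and a set F of fundamental operations,
  each a pair (arity, function on argument lists). Operations are only meaningful on
  lists of the given length with entries in A.\<close>

definition is_algebra :: "'a set \<Rightarrow> (nat \<times> ('a list \<Rightarrow> 'a)) set \<Rightarrow> bool" where
  "is_algebra A F \<longleftrightarrow> A \<noteq> {} \<and>
     (\<forall>(n, f) \<in> F. \<forall>xs. length xs = n \<and> set xs \<subseteq> A \<longrightarrow> f xs \<in> A)"

inductive_set clo :: "(nat \<times> ('a list \<Rightarrow> 'a)) set \<Rightarrow> nat \<Rightarrow> ('a list \<Rightarrow> 'a) set"
  for F :: "(nat \<times> ('a list \<Rightarrow> 'a)) set" and n :: nat where
  proj: "i < n \<Longrightarrow> (\<lambda>xs. xs ! i) \<in> clo F n"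
| app: "(k, f) \<in> F \<Longrightarrow> length gs = k \<Longrightarrow> \<forall>g\<in>set gs. g \<in> clo F n \<Longrightarrow>
        (\<lambda>xs. f (map (\<lambda>g. g xs) gs)) \<in> clo F n"

definition closed_under :: "(nat \<times> ('a list \<Rightarrow> 'a)) set \<Rightarrow> 'a set \<Rightarrow> bool" where
  "closed_under F B \<longleftrightarrow> (\<forall>(n, f) \<in> F. \<forall>xs. length xs = n \<and> set xs \<subseteq> B \<longrightarrow> f xs \<in> B)"

definition subalgebra :: "'a set \<Rightarrow> (nat \<times> ('a list \<Rightarrow> 'a)) set \<Rightarrow> 'a set \<Rightarrow> bool" where
  "subalgebra A F B \<longleftrightarrow> B \<subseteq> A \<and> closed_under F B"

definition Sg :: "'a set \<Rightarrow> (nat \<times> ('a list \<Rightarrow> 'a)) set \<Rightarrow> 'a set \<Rightarrow> 'a set" where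
  "Sg A F X = \<Inter>{B. subalgebra A F B \<and> X \<subseteq> B}"

definition congruence :: "'a set \<Rightarrow> (nat \<times> ('a list \<Rightarrow> 'a)) set \<Rightarrow> ('a \<times> 'a) set \<Rightarrow> bool" where
  "congruence A F \<theta> \<longleftrightarrow> equiv A \<theta> \<and>
     (\<forall>(n, f) \<in> F. \<forall>xs ys. length xs = n \<and> length ys = n \<and> set xs \<subseteq> A \<and> set ys \<subseteq> A \<and>
        (\<forall>i<n. (xs ! i, ys ! i) \<in> \<theta>) \<longrightarrow> (f xs, f ys) \<in> \<theta>)"

definition simple_alg :: "'a set \<Rightarrow> (nat \<times> ('a list \<Rightarrow> 'a)) set \<Rightarrow> bool" where
  "simple_alg A F \<longleftrightarrow> is_algebra A F \<and> (\<exists>a\<in>A. \<exists>b\<in>A. a \<noteq> b) \<and>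
     (\<forall>\<theta>. congruence A F \<theta> \<longrightarrow> \<theta> = Id_on A \<or> \<theta> = A \<times> A)"

definition strictly_simple :: "'a set \<Rightarrow> (nat \<times> ('a list \<Rightarrow> 'a)) set \<Rightarrow> bool" where
  "strictly_simple A F \<longleftrightarrow> finite A \<and> simple_alg A F \<and>
     (\<forall>B. subalgebra A F B \<and> B \<noteq> A \<longrightarrow> card B \<le> 1)"

text \<open>Unary term operations are elements of clo F 1, applied as u [x].\<close>
definition idempotent_on :: "'a set \<Rightarrow> ('a list \<Rightarrow> 'a) \<Rightarrow> bool" where
  "idempotent_on A u \<longleftrightarrow> (\<forall>x\<in>A. u [u [x]] = u [x])"

definition nonconstant_on :: "'a set \<Rightarrow> ('a list \<Rightarrow> 'a) \<Rightarrow> bool" where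
  "nonconstant_on A u \<longleftrightarrow> (\<exists>x\<in>A. \<exists>y\<in>A. u [x] \<noteq> u [y])"

definition urange :: "'a set \<Rightarrow> ('a list \<Rightarrow> 'a) \<Rightarrow> 'a set" where
  "urange A u = (\<lambda>x. u [x]) ` A"

definition minimal_idempotent :: "'a set \<Rightarrow> (nat \<times> ('a list \<Rightarrow> 'a)) set \<Rightarrow> ('a list \<Rightarrow> 'a) \<Rightarrow> bool" where
  "minimal_idempotent A F e \<longleftrightarrow> e \<in> clo F 1 \<and> nonconstant_on A e \<and> idempotent_on A e \<and>
     (\<forall>g \<in> clo F 1. nonconstant_on A g \<and> idempotent_on A g \<and> urange A g \<subseteq> urange A e
        \<longrightarrow> urange A g = urange A e)"

definition term_minimal :: "'a set \<Rightarrow> (nat \<times> ('a list \<Rightarrow> 'a)) set \<Rightarrow> bool" where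
  "term_minimal A F \<longleftrightarrow> minimal_idempotent A F (\<lambda>xs. xs ! 0)"

definition loc_univ :: "'a set \<Rightarrow> ('a list \<Rightarrow> 'a) \<Rightarrow> 'a set" where
  "loc_univ A e = urange A e"

definition loc_ops :: "(nat \<times> ('a list \<Rightarrow> 'a)) set \<Rightarrow> ('a list \<Rightarrow> 'a) \<Rightarrow> (nat \<times> ('a list \<Rightarrow> 'a)) set" where
  "loc_ops F e = {(n, \<lambda>xs. e [t xs]) | n t. t \<in> clo F n}"

definition separates :: "'a set \<Rightarrow> (nat \<times> ('a list \<Rightarrow> 'a)) set \<Rightarrow> ('a list \<Rightarrow> 'a) \<Rightarrow> bool" where
  "separates A F e \<longleftrightarrow> (\<forall>a\<in>A. \<forall>b\<in>A. a \<noteq> b \<longrightarrow> (\<exists>g\<in>clo F 1. e [g [a]] \<noteq> e [g [b]]))"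

definition dense :: "'a set \<Rightarrow> (nat \<times> ('a list \<Rightarrow> 'a)) set \<Rightarrow> ('a list \<Rightarrow> 'a) \<Rightarrow> bool" where
  "dense A F e \<longleftrightarrow> Sg A F (urange A e) = A"

end

theory Submission
  imports Defs
begin

text \<open>
  In a strictly simple algebra A, a compatible relation R on A (a subuniverse of A \<times> A) whose
  diagonal part contains two distinct points contains the whole diagonal, because that part is a
  subalgebra; R is then preserved by all unary polynomials. Dually, for any map \<phi> on A the pairs
  (a, b) with \<phi> (p a) = \<phi> (p b) for all unary polynomials p form a congruence, which is the
  identity as soon as \<phi> is nonconstant.

  If no unary term separates a \<noteq> b through e, then either e fixes both (and identifies them), or
  one of them, say a, generates A; then \<open>{(g a, g b)}\<close> is compatible and contains the diagonal
  of e(A), hence all of it, so e identifies p a and p b for every unary polynomial p, forcing a = b.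
  A congruence \<theta> of e(A), or a subalgebra B with two distinct elements, is pulled back to A
  in the same way, through the subuniverse of A \<times> A generated by \<theta>, resp. by the diagonal of
  B; this makes e(A) strictly simple. Finally, an idempotent unary term g of e(A) gives the
  idempotent unary term g \<circ> e of A with the same range, so the minimality of e makes e(A) term
  minimal.
\<close>

lemma closed_underI:
  assumes "\<And>n f xs. (n, f) \<in> F \<Longrightarrow> length xs = n \<Longrightarrow> set xs \<subseteq> B \<Longrightarrow> f xs \<in> B"
  shows "closed_under F B"
  using assms unfolding closed_under_def by fast

lemma closed_underD:
  assumes "closed_under F B" "(n, f) \<in> F" "length xs = n" "set xs \<subseteq> B"
  shows "f xs \<in> B"
  using assms unfolding closed_under_def by fast

lemma congruenceD:
  assumes "congruence A F \<theta>" "(n, f) \<in> F" "length xs = n" "length ys = n"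
    "set xs \<subseteq> A" "set ys \<subseteq> A" "\<forall>i<n. (xs ! i, ys ! i) \<in> \<theta>"
  shows "(f xs, f ys) \<in> \<theta>"
proof -
  have "\<forall>(n, f) \<in> F. \<forall>xs ys. length xs = n \<and> length ys = n \<and> set xs \<subseteq> A \<and> set ys \<subseteq> A \<and>
      (\<forall>i<n. (xs ! i, ys ! i) \<in> \<theta>) \<longrightarrow> (f xs, f ys) \<in> \<theta>"
    using assms(1) unfolding congruence_def by (rule conjunct2)
  from bspec[OF this assms(2)] show ?thesis using assms(3-7) by simp
qed

lemma clo_closed:
  assumes "closed_under F B" "t \<in> clo F n" "length xs = n" "set xs \<subseteq> B"
  shows "t xs \<in> B"
  using assms(2-4)
proof (induction t rule: clo.induct)
  case (app k f gs)
  then show ?case by (intro closed_underD[OF assms(1) app(1)]) auto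
qed auto

lemma clo_comp:
  assumes "t \<in> clo F n" "length gs = n" "set gs \<subseteq> clo F m"
  shows "(\<lambda>xs. t (map (\<lambda>g. g xs) gs)) \<in> clo F m"
  using assms
proof (induction t rule: clo.induct)
  case (proj i)
  have "(\<lambda>xs. map (\<lambda>g. g xs) gs ! i) = gs ! i" using proj by (auto simp: fun_eq_iff)
  then show ?case using proj by auto
next
  case (app k f hs)
  have "(\<lambda>xs. f (map (\<lambda>h. h xs) (map (\<lambda>h xs. h (map (\<lambda>g. g xs) gs)) hs))) \<in> clo F m"
    by (rule clo.app[OF app(1)]) (use app in auto)
  then show ?case by (simp add: o_def)
qed

lemma clo_unary_proj: "(\<lambda>xs. xs ! 0) \<in> clo F 1"
  by (rule clo.proj) simp

lemma list_choice:
  assumes "\<forall>q\<in>set qs. \<exists>g. P q g"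
  obtains gs where "length gs = length qs" "\<forall>i<length qs. P (qs ! i) (gs ! i)"
proof
  show "length (map (\<lambda>q. SOME g. P q g) qs) = length qs" by simp
  show "\<forall>i<length qs. P (qs ! i) (map (\<lambda>q. SOME g. P q g) qs ! i)"
    using assms by (auto intro: someI_ex)
qed

lemma is_algebra_iff: "is_algebra A F \<longleftrightarrow> A \<noteq> {} \<and> closed_under F A"
  unfolding is_algebra_def closed_under_def ..

lemma simple_alg_closed: "simple_alg A F \<Longrightarrow> closed_under F A"
  unfolding simple_alg_def is_algebra_iff by blast

lemma simple_alg_congruence:
  "simple_alg A F \<Longrightarrow> congruence A F \<theta> \<Longrightarrow> \<theta> = Id_on A \<or> \<theta> = A \<times> A"
  unfolding simple_alg_def by blast

lemma strictly_simple_simple_alg: "strictly_simple A F \<Longrightarrow> simple_alg A F"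
  unfolding strictly_simple_def by blast

lemma strictly_simple_finite: "strictly_simple A F \<Longrightarrow> finite A"
  unfolding strictly_simple_def by (rule conjunct1)

lemmas strictly_simple_closed = simple_alg_closed[OF strictly_simple_simple_alg]
lemmas strictly_simple_congruence = simple_alg_congruence[OF strictly_simple_simple_alg]

lemma strictly_simple_subalgebra_eq:
  assumes "strictly_simple A F" "subalgebra A F B" "x \<in> B" "y \<in> B" "x \<noteq> y"
  shows "B = A"
proof (rule ccontr)
  assume "B \<noteq> A"
  then have "card B \<le> 1" using assms(1,2) unfolding strictly_simple_def by blast
  moreover have "finite B"
    using assms(1,2) finite_subset unfolding strictly_simple_def subalgebra_def by blast
  ultimately show False using assms(3-5) by (auto simp: card_le_Suc0_iff_eq)
qed

definition compatible :: "(nat \<times> ('a list \<Rightarrow> 'a)) set \<Rightarrow> ('a \<times> 'a) set \<Rightarrow> bool" where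
  "compatible F R \<longleftrightarrow>
     (\<forall>(k, f) \<in> F. \<forall>qs. length qs = k \<and> set qs \<subseteq> R \<longrightarrow> (f (map fst qs), f (map snd qs)) \<in> R)"

lemma compatibleI:
  assumes "\<And>k f qs. (k, f) \<in> F \<Longrightarrow> length qs = k \<Longrightarrow> set qs \<subseteq> R \<Longrightarrow>
     (f (map fst qs), f (map snd qs)) \<in> R"
  shows "compatible F R"
  using assms unfolding compatible_def by fast

lemma compatibleD:
  "compatible F R \<Longrightarrow> (k, f) \<in> F \<Longrightarrow> length qs = k \<Longrightarrow> set qs \<subseteq> R \<Longrightarrow>
     (f (map fst qs), f (map snd qs)) \<in> R"
  unfolding compatible_def by fast

lemma compatible_diag_closed:
  assumes "compatible F R"
  shows "closed_under F {c. (c, c) \<in> R}"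
proof (rule closed_underI)
  fix n f cs assume "(n, f) \<in> F" "length cs = n" "set cs \<subseteq> {c. (c, c) \<in> R}"
  then have "(f (map fst (map (\<lambda>c. (c, c)) cs)), f (map snd (map (\<lambda>c. (c, c)) cs))) \<in> R"
    by (intro compatibleD[OF assms]) auto
  then show "f cs \<in> {c. (c, c) \<in> R}" by (simp add: o_def)
qed

lemma strictly_simple_compatible_Id_on:
  assumes ss: "strictly_simple A F" and R: "compatible F R"
    and "x \<in> A" "y \<in> A" "x \<noteq> y" "(x, x) \<in> R" "(y, y) \<in> R"
  shows "Id_on A \<subseteq> R"
proof -
  let ?D = "A \<inter> {c. (c, c) \<in> R}"
  have "closed_under F ?D"
    using strictly_simple_closed[OF ss] compatible_diag_closed[OF R]
    unfolding closed_under_def by blast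
  then have "subalgebra A F ?D" unfolding subalgebra_def by blast
  with assms have "?D = A" by (intro strictly_simple_subalgebra_eq[OF ss]) auto
  then show ?thesis by blast
qed

text \<open>For lists of equal length, the subuniverse of A \<times> A generated by the pairs \<open>(xs ! i, ys ! i)\<close>.\<close>

definition term_pairs :: "(nat \<times> ('a list \<Rightarrow> 'a)) set \<Rightarrow> 'a list \<Rightarrow> 'a list \<Rightarrow> ('a \<times> 'a) set" where
  "term_pairs F xs ys = (\<lambda>t. (t xs, t ys)) ` clo F (length xs)"

lemma term_pairs_nth: "i < length xs \<Longrightarrow> (xs ! i, ys ! i) \<in> term_pairs F xs ys"
  unfolding term_pairs_def by (rule image_eqI[of _ _ "\<lambda>zs. zs ! i"]) (auto intro: clo.proj)

lemma set_subset_term_pairs: "set L \<subseteq> term_pairs F (map fst L) (map snd L)"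
proof
  fix q assume "q \<in> set L"
  then obtain i where "i < length L" "q = L ! i" by (auto simp: in_set_conv_nth)
  then show "q \<in> term_pairs F (map fst L) (map snd L)"
    using term_pairs_nth[where i = i and xs = "map fst L" and ys = "map snd L"] by simp
qed

lemma compatible_term_pairs: "compatible F (term_pairs F xs ys)"
proof (rule compatibleI)
  fix k f qs assume f: "(k, f) \<in> F" and qs: "length qs = k" "set qs \<subseteq> term_pairs F xs ys"
  then have "\<forall>q\<in>set qs. \<exists>t. t \<in> clo F (length xs) \<and> q = (t xs, t ys)"
    unfolding term_pairs_def by blast
  then obtain ts where ts: "length ts = length qs"
    "\<forall>i<length qs. ts ! i \<in> clo F (length xs) \<and> qs ! i = ((ts ! i) xs, (ts ! i) ys)"
    by (rule list_choice)
  have "(\<lambda>zs. f (map (\<lambda>t. t zs) ts)) \<in> clo F (length xs)"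
    using ts qs by (intro clo.app[OF f]) (auto simp: in_set_conv_nth)
  moreover have "map fst qs = map (\<lambda>t. t xs) ts" "map snd qs = map (\<lambda>t. t ys) ts"
    using ts by (auto intro!: nth_equalityI)
  ultimately show "(f (map fst qs), f (map snd qs)) \<in> term_pairs F xs ys"
    unfolding term_pairs_def by (auto intro: image_eqI[of _ _ "\<lambda>zs. f (map (\<lambda>t. t zs) ts)"])
qed

inductive_set pol :: "'a set \<Rightarrow> (nat \<times> ('a list \<Rightarrow> 'a)) set \<Rightarrow> ('a \<Rightarrow> 'a) set"
  for A :: "'a set" and F :: "(nat \<times> ('a list \<Rightarrow> 'a)) set" where
  pid: "(\<lambda>x. x) \<in> pol A F"
| pconst: "c \<in> A \<Longrightarrow> (\<lambda>x. c) \<in> pol A F"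
| papp: "(k, f) \<in> F \<Longrightarrow> length ps = k \<Longrightarrow> \<forall>p\<in>set ps. p \<in> pol A F \<Longrightarrow>
         (\<lambda>x. f (map (\<lambda>p. p x) ps)) \<in> pol A F"

lemma pol_closed:
  assumes "closed_under F A" "p \<in> pol A F" "x \<in> A"
  shows "p x \<in> A"
  using assms(2)
proof (induction p rule: pol.induct)
  case (papp k f ps)
  then show ?case by (intro closed_underD[OF assms(1) papp(1)]) auto
qed (use assms in auto)

lemma pol_comp:
  assumes "p \<in> pol A F" "q \<in> pol A F"
  shows "(\<lambda>x. p (q x)) \<in> pol A F"
  using assms(1)
proof (induction p rule: pol.induct)
  case (papp k f ps)
  have "(\<lambda>x. f (map (\<lambda>p. p x) (map (\<lambda>p x. p (q x)) ps))) \<in> pol A F"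
    by (rule pol.papp[OF papp(1)]) (use papp in auto)
  then show ?case by (simp add: o_def)
qed (use assms(2) in \<open>auto intro: pol.intros\<close>)

lemma pol_list_update:
  assumes "(k, f) \<in> F" "length zs = k" "set zs \<subseteq> A" "j < k"
  shows "(\<lambda>x. f (zs[j := x])) \<in> pol A F"
proof -
  let ?ps = "map (\<lambda>i. if i = j then (\<lambda>x. x) else (\<lambda>x. zs ! i)) [0..<k]"
  have "(\<lambda>x. f (map (\<lambda>p. p x) ?ps)) \<in> pol A F"
    using assms by (intro pol.papp) (auto intro!: pol.intros nth_mem)
  moreover have "map (\<lambda>p. p x) ?ps = zs[j := x]" for x
    using assms(2) by (intro nth_equalityI) auto
  ultimately show ?thesis by simp
qed

lemma compatible_pol:
  assumes "compatible F R" "\<forall>c\<in>A. (c, c) \<in> R" "(a, b) \<in> R" "p \<in> pol A F"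
  shows "(p a, p b) \<in> R"
  using assms(4)
proof (induction p rule: pol.induct)
  case (papp k f ps)
  then have "(f (map fst (map (\<lambda>p. (p a, p b)) ps)), f (map snd (map (\<lambda>p. (p a, p b)) ps))) \<in> R"
    by (intro compatibleD[OF assms(1) papp(1)]) auto
  then show ?case by (simp add: o_def)
qed (use assms(2,3) in auto)

lemma pol_invariant_op:
  assumes cl: "closed_under F A" and T: "equiv A T"
    and inv: "\<And>p x y. p \<in> pol A F \<Longrightarrow> (x, y) \<in> T \<Longrightarrow> (p x, p y) \<in> T"
    and f: "(n, f) \<in> F" and len: "length xs = n" "length ys = n"
    and A: "set xs \<subseteq> A" "set ys \<subseteq> A" and rel: "\<forall>i<n. (xs ! i, ys ! i) \<in> T"
  shows "(f xs, f ys) \<in> T"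
proof -
  \<comment> \<open>replace the arguments one at a time, each step being a unary polynomial\<close>
  have "(f xs, f (take j ys @ drop j xs)) \<in> T" if "j \<le> n" for j
    using that
  proof (induction j)
    case 0
    have "f xs \<in> A" by (rule closed_underD[OF cl f len(1) A(1)])
    then show ?case using T by (simp add: equiv_def refl_on_def)
  next
    case (Suc j)
    let ?zs = "take j ys @ drop j xs"
    have "?zs[j := xs ! j] = ?zs" "?zs[j := ys ! j] = take (Suc j) ys @ drop (Suc j) xs"
      using Suc.prems len
      by (simp_all add: list_update_append take_Suc_conv_app_nth Cons_nth_drop_Suc[symmetric])
    moreover have "(\<lambda>x. f (?zs[j := x])) \<in> pol A F"
      using Suc.prems len A set_take_subset[of j ys] set_drop_subset[of j xs]
      by (intro pol_list_update[OF f]) auto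
    ultimately have "(f ?zs, f (take (Suc j) ys @ drop (Suc j) xs)) \<in> T"
      using inv[of "\<lambda>x. f (?zs[j := x])" "xs ! j" "ys ! j"] rel Suc.prems by simp
    with Suc show ?case using T by (meson Suc_leD equiv_def transE)
  qed
  from this[of n] show ?thesis using len by simp
qed

lemma congruence_if_pol_invariant:
  assumes "closed_under F A" "equiv A T"
    and "\<And>p x y. p \<in> pol A F \<Longrightarrow> (x, y) \<in> T \<Longrightarrow> (p x, p y) \<in> T"
  shows "congruence A F T"
  unfolding congruence_def
  by (auto intro: assms(2,3) pol_invariant_op[OF assms(1,2)])

text \<open>The largest congruence of A that \<phi> maps into R.\<close>

definition pol_cong :: "'a set \<Rightarrow> (nat \<times> ('a list \<Rightarrow> 'a)) set \<Rightarrow> ('a \<Rightarrow> 'b) \<Rightarrow> ('b \<times> 'b) set \<Rightarrow> ('a \<times> 'a) set" where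
  "pol_cong A F \<phi> R = {(a, b) \<in> A \<times> A. \<forall>p\<in>pol A F. (\<phi> (p a), \<phi> (p b)) \<in> R}"

lemma congruence_pol_cong:
  assumes cl: "closed_under F A" and R: "equiv V R" and \<phi>: "\<phi> ` A \<subseteq> V"
  shows "congruence A F (pol_cong A F \<phi> R)"
proof (rule congruence_if_pol_invariant[OF cl])
  have refl: "(v, v) \<in> R" if "v \<in> V" for v
    using R that by (auto elim: equivE dest: refl_onD)
  have sym: "(w, v) \<in> R" if "(v, w) \<in> R" for v w
    using R that by (auto elim: equivE dest: symD)
  have trans: "(u, w) \<in> R" if "(u, v) \<in> R" "(v, w) \<in> R" for u v w
    using R that by (auto elim!: equivE dest: transD)
  show "equiv A (pol_cong A F \<phi> R)"
  proof (rule equivI)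
    show "pol_cong A F \<phi> R \<subseteq> A \<times> A"
      by (auto simp: pol_cong_def)
    show "refl_on A (pol_cong A F \<phi> R)"
      using refl \<phi> pol_closed[OF cl] by (auto simp: pol_cong_def refl_on_def image_subset_iff)
    show "sym (pol_cong A F \<phi> R)"
      using sym by (auto simp: pol_cong_def intro!: symI)
    show "trans (pol_cong A F \<phi> R)"
      using trans by (auto simp: pol_cong_def intro!: transI)
  qed
  show "(p x, p y) \<in> pol_cong A F \<phi> R" if "p \<in> pol A F" "(x, y) \<in> pol_cong A F \<phi> R" for p x y
    using that pol_comp[of _ A F p] pol_closed[OF cl] by (auto simp: pol_cong_def)
qed

lemma simple_alg_pol_separation:
  assumes simple: "simple_alg A F" and "x \<in> A" "y \<in> A" "\<phi> x \<noteq> \<phi> y"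
    and "a \<in> A" "b \<in> A" "\<forall>p\<in>pol A F. \<phi> (p a) = \<phi> (p b)"
  shows "a = b"
proof -
  have "equiv UNIV (Id :: ('b \<times> 'b) set)"
    by (simp add: equiv_def refl_Id sym_Id trans_Id)
  then have cong: "congruence A F (pol_cong A F \<phi> Id)"
    by (rule congruence_pol_cong[OF simple_alg_closed[OF simple]]) simp
  have "(x, y) \<notin> pol_cong A F \<phi> Id"
    using assms(4) unfolding pol_cong_def by (auto intro!: bexI[OF _ pol.pid])
  then have "pol_cong A F \<phi> Id \<noteq> A \<times> A" using assms(2,3) by blast
  then have "pol_cong A F \<phi> Id = Id_on A"
    using simple_alg_congruence[OF simple cong] by blast
  moreover have "(a, b) \<in> pol_cong A F \<phi> Id"
    using assms(5-7) by (simp add: pol_cong_def)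
  ultimately show ?thesis by auto
qed

lemma subalgebra_Sg:
  assumes "closed_under F A" "X \<subseteq> A"
  shows "subalgebra A F (Sg A F X)"
  unfolding subalgebra_def
proof
  show "Sg A F X \<subseteq> A" using assms unfolding Sg_def subalgebra_def by blast
  show "closed_under F (Sg A F X)"
  proof (rule closed_underI)
    fix n f xs assume "(n, f) \<in> F" "length xs = n" "set xs \<subseteq> Sg A F X"
    then show "f xs \<in> Sg A F X"
      unfolding Sg_def subalgebra_def using closed_underD[of F _ n f xs] by blast
  qed
qed

lemma strictly_simple_Sg_eq:
  assumes ss: "strictly_simple A F" and "X \<subseteq> A" "x \<in> X" "y \<in> X" "x \<noteq> y"
  shows "Sg A F X = A"
  using assms subalgebra_Sg[OF strictly_simple_closed[OF ss] assms(2)]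
  by (intro strictly_simple_subalgebra_eq[OF ss, of _ x y]) (auto simp: Sg_def)

lemma urange_clo_subset: "closed_under F A \<Longrightarrow> g \<in> clo F 1 \<Longrightarrow> urange A g \<subseteq> A"
  unfolding urange_def by (auto intro: clo_closed)

lemma minimal_idempotent_clo: "minimal_idempotent A F e \<Longrightarrow> e \<in> clo F 1"
  unfolding minimal_idempotent_def by blast

lemma minimal_idempotent_minimal:
  "minimal_idempotent A F e \<Longrightarrow> g \<in> clo F 1 \<Longrightarrow> nonconstant_on A g \<Longrightarrow> idempotent_on A g \<Longrightarrow>
     urange A g \<subseteq> urange A e \<Longrightarrow> urange A g = urange A e"
  unfolding minimal_idempotent_def by blast

lemma minimal_idempotent_nonconstant:
  assumes "minimal_idempotent A F e"
  obtains x y where "x \<in> A" "y \<in> A" "e [x] \<noteq> e [y]"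
  using assms unfolding minimal_idempotent_def nonconstant_on_def by blast

lemma minimal_idempotent_urange_two:
  assumes "minimal_idempotent A F e"
  obtains u v where "u \<in> urange A e" "v \<in> urange A e" "u \<noteq> v"
proof -
  obtain x y where "x \<in> A" "y \<in> A" "e [x] \<noteq> e [y]"
    using minimal_idempotent_nonconstant[OF assms] .
  then show ?thesis using that unfolding urange_def by blast
qed

lemma minimal_idempotent_fixes_urange:
  "minimal_idempotent A F e \<Longrightarrow> u \<in> urange A e \<Longrightarrow> e [u] = u"
  unfolding minimal_idempotent_def idempotent_on_def urange_def by auto

lemma minimal_idempotent_dense:
  assumes ss: "strictly_simple A F" and mi: "minimal_idempotent A F e"
  shows "dense A F e"
proof -
  obtain u v where "u \<in> urange A e" "v \<in> urange A e" "u \<noteq> v"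
    using minimal_idempotent_urange_two[OF mi] .
  then show ?thesis
    unfolding dense_def
    using urange_clo_subset[OF strictly_simple_closed[OF ss] minimal_idempotent_clo[OF mi]]
    by (intro strictly_simple_Sg_eq[OF ss])
qed

lemma subalgebra_unary_orbit:
  assumes cl: "closed_under F A" and a: "a \<in> A"
  shows "subalgebra A F {g [a] | g. g \<in> clo F 1}"
proof -
  have "{g [a] | g. g \<in> clo F 1} = {c. (c, c) \<in> term_pairs F [a] [a]}"
    unfolding term_pairs_def by auto
  then have "closed_under F {g [a] | g. g \<in> clo F 1}"
    using compatible_diag_closed[OF compatible_term_pairs] by metis
  moreover have "{g [a] | g. g \<in> clo F 1} \<subseteq> A"
    using clo_closed[OF cl] a by fastforce
  ultimately show ?thesis unfolding subalgebra_def by blast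
qed

lemma unary_orbit_cases:
  assumes ss: "strictly_simple A F" and a: "a \<in> A"
  shows "{g [a] | g. g \<in> clo F 1} = A \<or> (\<forall>g\<in>clo F 1. g [a] = a)"
proof -
  have "a \<in> {g [a] | g. g \<in> clo F 1}"
    using clo_unary_proj by (intro CollectI exI[of _ "\<lambda>xs. xs ! 0"]) simp
  then show ?thesis
    using strictly_simple_subalgebra_eq[OF ss subalgebra_unary_orbit[OF strictly_simple_closed[OF ss] a]]
    by blast
qed

lemma eq_if_unseparated_from_generator:
  assumes ss: "strictly_simple A F" and mi: "minimal_idempotent A F e"
    and a: "a \<in> A" and b: "b \<in> A" and gen: "{g [a] | g. g \<in> clo F 1} = A"
    and unsep: "\<forall>g\<in>clo F 1. e [g [a]] = e [g [b]]"
  shows "a = b"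
proof -
  let ?S = "term_pairs F [a] [b]"
  have e: "e \<in> clo F 1" by (rule minimal_idempotent_clo[OF mi])
  have UA: "urange A e \<subseteq> A" by (rule urange_clo_subset[OF strictly_simple_closed[OF ss] e])
  \<comment> \<open>a generates A, so each u = e(u) in the range of e is e(h(a)) = e(h(b)) for a unary term h\<close>
  have diag_urange: "(u, u) \<in> ?S" if u: "u \<in> urange A e" for u
  proof -
    obtain h where h: "h \<in> clo F 1" "u = h [a]" using u UA gen by blast
    have "(\<lambda>xs. e (map (\<lambda>g. g xs) [h])) \<in> clo F 1"
      using h(1) by (intro clo_comp[OF e]) auto
    moreover have "e [h [a]] = u" "e [h [b]] = u"
      using minimal_idempotent_fixes_urange[OF mi u] h unsep by auto
    ultimately show ?thesis
      unfolding term_pairs_def by (intro image_eqI[of _ _ "\<lambda>xs. e [h xs]"]) simp_all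
  qed
  obtain x y where xy: "x \<in> A" "y \<in> A" "e [x] \<noteq> e [y]"
    using minimal_idempotent_nonconstant[OF mi] .
  have "e [x] \<in> urange A e" "e [y] \<in> urange A e"
    using xy(1,2) unfolding urange_def by auto
  then have diag: "\<forall>c\<in>A. (c, c) \<in> ?S"
    using strictly_simple_compatible_Id_on[OF ss compatible_term_pairs _ _ xy(3)] UA diag_urange by blast
  have ab: "(a, b) \<in> ?S" using term_pairs_nth[where i = 0 and xs = "[a]" and ys = "[b]"] by simp
  have "e [p a] = e [p b]" if "p \<in> pol A F" for p
  proof -
    have "(p a, p b) \<in> ?S" by (rule compatible_pol[OF compatible_term_pairs diag ab that])
    then obtain t where "t \<in> clo F 1" "p a = t [a]" "p b = t [b]"
      unfolding term_pairs_def by auto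
    then show ?thesis using unsep by simp
  qed
  then show ?thesis
    using simple_alg_pol_separation[OF strictly_simple_simple_alg[OF ss] xy, of a b] a b by blast
qed

lemma minimal_idempotent_separates:
  assumes ss: "strictly_simple A F" and mi: "minimal_idempotent A F e"
  shows "separates A F e"
  unfolding separates_def
proof (intro ballI impI)
  fix a b assume a: "a \<in> A" and b: "b \<in> A" and "a \<noteq> b"
  show "\<exists>g\<in>clo F 1. e [g [a]] \<noteq> e [g [b]]"
  proof (rule ccontr)
    assume "\<not> (\<exists>g\<in>clo F 1. e [g [a]] \<noteq> e [g [b]])"
    then have unsep: "\<forall>g\<in>clo F 1. e [g [a]] = e [g [b]]" by blast
    consider "{g [a] | g. g \<in> clo F 1} = A" | "{g [b] | g. g \<in> clo F 1} = A"
      | "\<forall>g\<in>clo F 1. g [a] = a" "\<forall>g\<in>clo F 1. g [b] = b"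
      using unary_orbit_cases[OF ss a] unary_orbit_cases[OF ss b] by blast
    then show False
    proof cases
      case 1
      then show False using eq_if_unseparated_from_generator[OF ss mi a b _ unsep] \<open>a \<noteq> b\<close> by blast
    next
      case 2
      then show False using eq_if_unseparated_from_generator[OF ss mi b a] unsep \<open>a \<noteq> b\<close> by force
    next
      case 3
      then show False
        using unsep clo_unary_proj[of F] minimal_idempotent_clo[OF mi] \<open>a \<noteq> b\<close> by force
    qed
  qed
qed

lemma loc_opsI: "t \<in> clo F n \<Longrightarrow> (n, \<lambda>xs. e [t xs]) \<in> loc_ops F e"
  unfolding loc_ops_def by (intro CollectI exI[of _ n] exI[of _ t]) simp

lemma loc_opsE:
  assumes "(n, fe) \<in> loc_ops F e"
  obtains t where "t \<in> clo F n" "fe = (\<lambda>xs. e [t xs])"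
  using assms unfolding loc_ops_def by auto

lemma closed_under_loc_ops:
  assumes cl: "closed_under F A" and e: "e \<in> clo F 1"
  shows "closed_under (loc_ops F e) (urange A e)"
proof (rule closed_underI)
  fix n fe xs assume fe: "(n, fe) \<in> loc_ops F e" and xs: "length xs = n" "set xs \<subseteq> urange A e"
  obtain t where t: "t \<in> clo F n" "fe = (\<lambda>xs. e [t xs])" using loc_opsE[OF fe] .
  have "t xs \<in> A"
    using clo_closed[OF cl t(1) xs(1)] xs(2) urange_clo_subset[OF cl e] by blast
  then show "fe xs \<in> urange A e" unfolding t(2) urange_def by blast
qed

lemma congruence_equiv: "congruence A F \<theta> \<Longrightarrow> equiv A \<theta>"
  unfolding congruence_def by (rule conjunct1)

lemma loc_congruence_term_pairs:
  assumes cg: "congruence (urange A e) (loc_ops F e) \<theta>" and L: "set L \<subseteq> \<theta>"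
    and cd: "(c, d) \<in> term_pairs F (map fst L) (map snd L)"
  shows "(e [c], e [d]) \<in> \<theta>"
proof -
  obtain t where t: "t \<in> clo F (length L)" "c = t (map fst L)" "d = t (map snd L)"
    using cd unfolding term_pairs_def by auto
  have "set L \<subseteq> urange A e \<times> urange A e"
    using L equiv_type[OF congruence_equiv[OF cg]] by blast
  then have "set (map fst L) \<subseteq> urange A e" "set (map snd L) \<subseteq> urange A e"
    by auto
  moreover have "\<forall>i<length L. (map fst L ! i, map snd L ! i) \<in> \<theta>"
    using L by (auto dest: nth_mem)
  ultimately show ?thesis
    using congruenceD[OF cg loc_opsI[OF t(1)]] t(2,3) by simp
qed

lemma loc_congruence_trivial:
  assumes ss: "strictly_simple A F" and mi: "minimal_idempotent A F e"
    and cg: "congruence (urange A e) (loc_ops F e) \<theta>"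
  shows "\<theta> = Id_on (urange A e) \<or> \<theta> = urange A e \<times> urange A e"
proof -
  let ?U = "urange A e"
  let ?T = "pol_cong A F (\<lambda>x. e [x]) \<theta>"
  have cl: "closed_under F A" by (rule strictly_simple_closed[OF ss])
  have UA: "?U \<subseteq> A" by (rule urange_clo_subset[OF cl minimal_idempotent_clo[OF mi]])
  have eqv: "equiv ?U \<theta>" by (rule congruence_equiv[OF cg])
  have \<theta>U: "\<theta> \<subseteq> ?U \<times> ?U" by (rule equiv_type[OF eqv])
  have refl: "Id_on ?U \<subseteq> \<theta>" using eqv by (auto elim: equivE dest: refl_onD)
  have "congruence A F ?T"
    by (rule congruence_pol_cong[OF cl eqv]) (auto simp: urange_def)
  then consider "?T = A \<times> A" | "?T = Id_on A"
    using strictly_simple_congruence[OF ss] by blast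
  then show ?thesis
  proof cases
    case 1
    have "(u, v) \<in> \<theta>" if "u \<in> ?U" "v \<in> ?U" for u v
    proof -
      have "(u, v) \<in> ?T" using that UA 1 by blast
      then have "(e [u], e [v]) \<in> \<theta>" unfolding pol_cong_def using pol.pid by fastforce
      then show ?thesis using that minimal_idempotent_fixes_urange[OF mi] by simp
    qed
    then show ?thesis using \<theta>U by blast
  next
    case 2
    have "finite ?U" using UA strictly_simple_finite[OF ss] by (rule finite_subset)
    then have "finite \<theta>" using finite_subset[OF \<theta>U] by blast
    then obtain L where L: "set L = \<theta>" using finite_list by blast
    let ?R = "term_pairs F (map fst L) (map snd L)"
    have \<theta>R: "\<theta> \<subseteq> ?R" using set_subset_term_pairs[of L F] L by simp
    obtain u v where uv: "u \<in> ?U" "v \<in> ?U" "u \<noteq> v"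
      using minimal_idempotent_urange_two[OF mi] .
    then have diag: "\<forall>c\<in>A. (c, c) \<in> ?R"
      using strictly_simple_compatible_Id_on[OF ss compatible_term_pairs _ _ uv(3)] UA refl \<theta>R by blast
    \<comment> \<open>?R is invariant under unary polynomials, and e maps it into \<theta>, so \<theta> \<subseteq> ?T\<close>
    have "(u, v) \<in> ?T" if uv: "(u, v) \<in> \<theta>" for u v
    proof -
      have "(e [p u], e [p v]) \<in> \<theta>" if "p \<in> pol A F" for p
        using L compatible_pol[OF compatible_term_pairs diag subsetD[OF \<theta>R uv] that]
        by (intro loc_congruence_term_pairs[OF cg]) simp_all
      moreover have "u \<in> A" "v \<in> A" using uv \<theta>U UA by auto
      ultimately show ?thesis unfolding pol_cong_def by blast
    qed
    then have "\<theta> \<subseteq> Id_on ?U" using 2 \<theta>U by auto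
    then show ?thesis using refl by blast
  qed
qed

lemma loc_subalgebra_trivial:
  assumes ss: "strictly_simple A F" and mi: "minimal_idempotent A F e"
    and B: "subalgebra (urange A e) (loc_ops F e) B" and x: "x \<in> B" and y: "y \<in> B" and "x \<noteq> y"
  shows "B = urange A e"
proof -
  let ?U = "urange A e"
  have UA: "?U \<subseteq> A"
    by (rule urange_clo_subset[OF strictly_simple_closed[OF ss] minimal_idempotent_clo[OF mi]])
  have BU: "B \<subseteq> ?U" and Bcl: "closed_under (loc_ops F e) B"
    using B unfolding subalgebra_def by auto
  have "finite B" using BU UA strictly_simple_finite[OF ss] by (auto intro: finite_subset)
  then obtain L where L: "set L = B" using finite_list by blast
  have "(b, b) \<in> term_pairs F L L" if "b \<in> B" for b
    using set_subset_term_pairs[of "map (\<lambda>b. (b, b)) L" F] that L by (auto simp: o_def)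
  then have diag: "Id_on A \<subseteq> term_pairs F L L"
    using assms(4-6) BU UA by (intro strictly_simple_compatible_Id_on[OF ss compatible_term_pairs, of x y]) auto
  \<comment> \<open>every element of A is a term in elements of B, so e maps it into B\<close>
  have "u \<in> B" if u: "u \<in> ?U" for u
  proof -
    have "(u, u) \<in> term_pairs F L L" using u UA diag by blast
    then obtain t where t: "t \<in> clo F (length L)" "u = t L"
      unfolding term_pairs_def by auto
    have "e [t L] \<in> B" by (rule closed_underD[OF Bcl loc_opsI[OF t(1)]]) (use L in auto)
    then show ?thesis using t(2) minimal_idempotent_fixes_urange[OF mi u] by simp
  qed
  then show ?thesis using BU by blast
qed

lemma strictly_simple_loc:
  assumes ss: "strictly_simple A F" and mi: "minimal_idempotent A F e"
  shows "strictly_simple (loc_univ A e) (loc_ops F e)"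
proof -
  let ?U = "urange A e"
  have fin: "finite ?U" using strictly_simple_finite[OF ss] unfolding urange_def by simp
  have two: "\<exists>u\<in>?U. \<exists>v\<in>?U. u \<noteq> v"
    using minimal_idempotent_urange_two[OF mi] by metis
  have "closed_under (loc_ops F e) ?U"
    by (rule closed_under_loc_ops[OF strictly_simple_closed[OF ss] minimal_idempotent_clo[OF mi]])
  then have "is_algebra ?U (loc_ops F e)" using two by (auto simp: is_algebra_iff)
  moreover have "card B \<le> 1" if B: "subalgebra ?U (loc_ops F e) B" "B \<noteq> ?U" for B
  proof -
    have "finite B" using B(1) fin unfolding subalgebra_def by (auto intro: finite_subset)
    moreover have "\<forall>a\<in>B. \<forall>b\<in>B. a = b" using loc_subalgebra_trivial[OF ss mi B(1)] B(2) by blast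
    ultimately show ?thesis by (simp add: card_le_Suc0_iff_eq)
  qed
  ultimately show ?thesis
    using fin two loc_congruence_trivial[OF ss mi]
    unfolding loc_univ_def strictly_simple_def simple_alg_def by blast
qed

lemma clo_loc_ops:
  assumes "g \<in> clo (loc_ops F e) n" "e \<in> clo F 1"
  obtains t where "t \<in> clo F n" "\<And>xs. length xs = n \<Longrightarrow> g xs = t xs"
proof -
  have "\<exists>t\<in>clo F n. \<forall>xs. length xs = n \<longrightarrow> g xs = t xs"
    using assms(1)
  proof (induction g rule: clo.induct)
    case (proj i)
    then show ?case by (auto intro: clo.proj)
  next
    case (app k fe hs)
    obtain s where s: "s \<in> clo F k" "fe = (\<lambda>xs. e [s xs])"
      using loc_opsE[OF app(1)] .
    have "\<forall>h\<in>set hs. \<exists>t. t \<in> clo F n \<and> (\<forall>xs. length xs = n \<longrightarrow> h xs = t xs)"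
      using app(3) by blast
    then obtain ts where ts: "length ts = length hs"
      "\<forall>i<length hs. ts ! i \<in> clo F n \<and> (\<forall>xs. length xs = n \<longrightarrow> (hs ! i) xs = (ts ! i) xs)"
      by (rule list_choice)
    let ?t = "\<lambda>xs. e (map (\<lambda>g. g xs) [\<lambda>xs. s (map (\<lambda>t. t xs) ts)])"
    have "(\<lambda>xs. s (map (\<lambda>t. t xs) ts)) \<in> clo F n"
      using ts app(2) by (intro clo_comp[OF s(1)]) (auto simp: in_set_conv_nth)
    then have "?t \<in> clo F n" by (intro clo_comp[OF assms(2)]) auto
    moreover have "map (\<lambda>h. h xs) hs = map (\<lambda>t. t xs) ts" if "length xs = n" for xs
      using ts that by (intro nth_equalityI) auto
    ultimately show ?case unfolding s(2) by (intro bexI[of _ ?t]) simp_all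
  qed
  then show ?thesis using that by blast
qed

lemma urange_loc_idempotent:
  assumes cl: "closed_under F A" and mi: "minimal_idempotent A F e"
    and g: "g \<in> clo (loc_ops F e) 1" and nc: "nonconstant_on (urange A e) g"
    and idem: "idempotent_on (urange A e) g" and sub: "urange (urange A e) g \<subseteq> urange A e"
  shows "urange (urange A e) g = urange A e"
proof -
  let ?U = "urange A e"
  have e: "e \<in> clo F 1" by (rule minimal_idempotent_clo[OF mi])
  have UA: "?U \<subseteq> A" by (rule urange_clo_subset[OF cl e])
  have fix_e: "e [u] = u" if "u \<in> ?U" for u by (rule minimal_idempotent_fixes_urange[OF mi that])
  obtain t where t: "t \<in> clo F 1" "\<And>xs. length xs = 1 \<Longrightarrow> g xs = t xs"
    using clo_loc_ops[OF g e] by blast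
  \<comment> \<open>g o e is an idempotent unary term of A with the range of g, so the minimality of e applies\<close>
  define h where "h = (\<lambda>xs. t (map (\<lambda>g. g xs) [e]))"
  have h: "h \<in> clo F 1" unfolding h_def using e by (intro clo_comp[OF t(1)]) auto
  have hx: "h [x] = g [e [x]]" for x by (simp add: h_def t(2))
  have eU: "e [x] \<in> ?U" if "x \<in> A" for x using that unfolding urange_def by blast
  have range_h: "urange A h = urange ?U g" unfolding urange_def by (auto simp: hx)
  obtain u v where uv: "u \<in> ?U" "v \<in> ?U" "g [u] \<noteq> g [v]"
    using nc unfolding nonconstant_on_def by blast
  then have "h [u] \<noteq> h [v]" by (simp add: hx fix_e)
  then have "nonconstant_on A h" using uv(1,2) UA unfolding nonconstant_on_def by blast
  moreover have "idempotent_on A h"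
    unfolding idempotent_on_def
  proof
    fix x assume x: "x \<in> A"
    have "g [e [x]] \<in> ?U" using sub eU[OF x] unfolding urange_def by blast
    then have "h [h [x]] = g [g [e [x]]]" by (simp add: hx fix_e)
    also have "\<dots> = h [x]" using idem eU[OF x] unfolding idempotent_on_def by (simp add: hx)
    finally show "h [h [x]] = h [x]" .
  qed
  ultimately have "urange A h = ?U"
    using minimal_idempotent_minimal[OF mi h] sub range_h by simp
  then show ?thesis using range_h by simp
qed

lemma term_minimal_loc:
  assumes ss: "strictly_simple A F" and mi: "minimal_idempotent A F e"
  shows "term_minimal (loc_univ A e) (loc_ops F e)"
proof -
  let ?U = "urange A e"
  have range_proj: "urange ?U (\<lambda>xs. xs ! 0) = ?U" unfolding urange_def by simp
  have "nonconstant_on ?U (\<lambda>xs. xs ! 0)"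
    using minimal_idempotent_urange_two[OF mi] unfolding nonconstant_on_def by (metis nth_Cons_0)
  then show ?thesis
    using clo_unary_proj[of "loc_ops F e"] range_proj
      urange_loc_idempotent[OF strictly_simple_closed[OF ss] mi]
    unfolding term_minimal_def minimal_idempotent_def loc_univ_def idempotent_on_def
    by auto
qed

theorem mainTheorem6:
  fixes A :: "'a set" and F :: "(nat \<times> ('a list \<Rightarrow> 'a)) set" and e :: "'a list \<Rightarrow> 'a"
  assumes "strictly_simple A F"
    and "minimal_idempotent A F e"
  shows "separates A F e \<and> dense A F e \<and>
         strictly_simple (loc_univ A e) (loc_ops F e) \<and>
         term_minimal (loc_univ A e) (loc_ops F e)"
  using minimal_idempotent_separates[OF assms] minimal_idempotent_dense[OF assms]
    strictly_simple_loc[OF assms] term_minimal_loc[OF assms]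
  by blast

end
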